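(* Let $H_{ij}$, $i=1,\ldots,b$, $j=1,\ldots,s_i$, be $n=\sum_{i=1}^b s_i$ null hypotheses arranged in $b$ blocks, with corresponding $p$-values $P_{ij}$, where each $p$-value of a true null hypothesis is distributed as $U(0,1)$. Assume the rows $(P_{i1},\ldots,P_{is_i})$, $i=1,\ldots,b$, are mutually independent, with arbitrary dependence allowed within each row. Fix $\alpha\in(0,1)$ and apply the following two-stage BH method: (1) set $\tilde P_i=\bar s\min_{1\le j\le s_i}P_{ij}$ with $\bar s=n/b$; (2) order the block $p$-values as $\tilde P_{(1)}\le\cdots\le\tilde P_{(b)}$ and let $B=\max\{1\le i\le b:\tilde P_{(i)}\le i\alpha/b\}$; (3) if this maximum exists, reject $H_{ij}$ for all $(i,j)$ with $\tilde P_i\le\tilde P_{(B)}$ and $P_{ij}\le B\alpha/n$, and otherwise reject nothing. Then for every configuration of true and false null hypotheses the false discovery rate of this method is at most $\alpha$.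
   Context: Write $H_{ij}=0$ if the hypothesis is true and $H_{ij}=1$ if it is false. If $V$ is the number of true null hypotheses rejected and $R$ the total number of rejections, the false discovery rate is $\mathrm{FDR}=E\left(V/\max\{R,1\}\right)$. *)

theory Defs
  imports "HOL-Probability.Probability"
begin

text \<open>Blocks are indexed 0..b-1, hypotheses within block i by 0..s i - 1.
  p i j is the p-value of hypothesis (i,j).\<close>

definition total_n :: "nat \<Rightarrow> (nat \<Rightarrow> nat) \<Rightarrow> nat" where
  "total_n b s = (\<Sum>i<b. s i)"

definition block_p :: "nat \<Rightarrow> (nat \<Rightarrow> nat) \<Rightarrow> (nat \<Rightarrow> nat \<Rightarrow> real) \<Rightarrow> nat \<Rightarrow> real" where
  "block_p b s p i = (real (total_n b s) / real b) * Min {p i j | j. j < s i}"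

definition sorted_block_p :: "nat \<Rightarrow> (nat \<Rightarrow> nat) \<Rightarrow> (nat \<Rightarrow> nat \<Rightarrow> real) \<Rightarrow> real list" where
  "sorted_block_p b s p = sort (map (block_p b s p) [0..<b])"

text \<open>k-th smallest block p-value, k = 1..b.\<close>
definition block_order_stat :: "nat \<Rightarrow> (nat \<Rightarrow> nat) \<Rightarrow> (nat \<Rightarrow> nat \<Rightarrow> real) \<Rightarrow> nat \<Rightarrow> real" where
  "block_order_stat b s p k = sorted_block_p b s p ! (k - 1)"

definition B_set :: "nat \<Rightarrow> (nat \<Rightarrow> nat) \<Rightarrow> real \<Rightarrow> (nat \<Rightarrow> nat \<Rightarrow> real) \<Rightarrow> nat set" where
  "B_set b s \<alpha> p = {k \<in> {1..b}. block_order_stat b s p k \<le> real k * \<alpha> / real b}"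

definition two_stage_rejections ::
  "nat \<Rightarrow> (nat \<Rightarrow> nat) \<Rightarrow> real \<Rightarrow> (nat \<Rightarrow> nat \<Rightarrow> real) \<Rightarrow> (nat \<times> nat) set" where
  "two_stage_rejections b s \<alpha> p =
     (if B_set b s \<alpha> p = {} then {}
      else (let B = Max (B_set b s \<alpha> p) in
        {(i, j). i < b \<and> j < s i \<and>
                 block_p b s p i \<le> block_order_stat b s p B \<and>
                 p i j \<le> real B * \<alpha> / real (total_n b s)}))"

text \<open>true_null i j holds iff H_ij = 0 (the null hypothesis is true).\<close>
definition num_false_rej ::
  "nat \<Rightarrow> (nat \<Rightarrow> nat) \<Rightarrow> real \<Rightarrow> (nat \<Rightarrow> nat \<Rightarrow> bool) \<Rightarrow> (nat \<Rightarrow> nat \<Rightarrow> real) \<Rightarrow> nat" where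
  "num_false_rej b s \<alpha> true_null p =
     card {(i, j) \<in> two_stage_rejections b s \<alpha> p. true_null i j}"

definition num_rej :: "nat \<Rightarrow> (nat \<Rightarrow> nat) \<Rightarrow> real \<Rightarrow> (nat \<Rightarrow> nat \<Rightarrow> real) \<Rightarrow> nat" where
  "num_rej b s \<alpha> p = card (two_stage_rejections b s \<alpha> p)"

definition FDR ::
  "'a measure \<Rightarrow> nat \<Rightarrow> (nat \<Rightarrow> nat) \<Rightarrow> real \<Rightarrow> (nat \<Rightarrow> nat \<Rightarrow> bool) \<Rightarrow> (nat \<Rightarrow> nat \<Rightarrow> 'a \<Rightarrow> real) \<Rightarrow> real" where
  "FDR M b s \<alpha> true_null P =
     (\<integral>\<omega>. real (num_false_rej b s \<alpha> true_null (\<lambda>i j. P i j \<omega>)) /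
          real (max (num_rej b s \<alpha> (\<lambda>i j. P i j \<omega>)) 1) \<partial>M)"

end

theory Submission
  imports Defs
begin

text \<open>Let B be the number of selected blocks and, for a block i, let B_i be the index the step-up
  procedure would find if the block p-value of block i were replaced by 0. If a true null (i, j)
  is rejected then B_i = B, and at least B hypotheses are rejected (the minimum of every selected
  block), so V / max R 1 is at most the sum, over the true nulls (i, j), of [P_ij \<le> B_i \<alpha> / n] / B_i.
  Since B_i is a function of the other blocks only, it is independent of the uniform P_ij, and each
  summand has expectation \<Sum>_k Pr(B_i = k) (k \<alpha> / n) / k = \<alpha> / n. There are at most n true nulls.\<close>

lemma sorted_nth_le_iff_length_filter:
  fixes xs :: "'a::linorder list"
  assumes "sorted xs" and "1 \<le> k" and "k \<le> length xs"
  shows "xs ! (k - 1) \<le> x \<longleftrightarrow> k \<le> length (filter (\<lambda>y. y \<le> x) xs)"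
proof -
  have length_filter: "length (filter (\<lambda>y. y \<le> x) xs) = card {m. m < length xs \<and> xs ! m \<le> x}"
    by (simp add: length_filter_conv_card)
  have mono: "xs ! m \<le> xs ! m'" if "m \<le> m'" "m' < length xs" for m m'
    using sorted_nth_mono[OF assms(1) that] .
  show ?thesis
  proof
    assume "xs ! (k - 1) \<le> x"
    moreover have "xs ! m \<le> xs ! (k - 1)" if "m < k" for m
      using mono that assms(3) by simp
    ultimately have "{..<k} \<subseteq> {m. m < length xs \<and> xs ! m \<le> x}"
      using assms(3) by fastforce
    from card_mono[OF _ this] show "k \<le> length (filter (\<lambda>y. y \<le> x) xs)"
      unfolding length_filter by simp
  next
    assume k: "k \<le> length (filter (\<lambda>y. y \<le> x) xs)"
    show "xs ! (k - 1) \<le> x"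
    proof (rule ccontr)
      assume "\<not> xs ! (k - 1) \<le> x"
      then have "m < k - 1" if "m < length xs" "xs ! m \<le> x" for m
        using mono[of "k - 1" m] that by (meson not_le order_trans)
      then have "{m. m < length xs \<and> xs ! m \<le> x} \<subseteq> {..<k - 1}"
        by auto
      from card_mono[OF _ this] show False
        using k assms(2) unfolding length_filter by simp
    qed
  qed
qed

lemma sort_map_nth_le_iff_card:
  fixes t :: "nat \<Rightarrow> 'a::linorder"
  assumes "1 \<le> k" and "k \<le> b"
  shows "sort (map t [0..<b]) ! (k - 1) \<le> x \<longleftrightarrow> k \<le> card {l \<in> {..<b}. t l \<le> x}"
proof -
  have "length (filter (\<lambda>y. y \<le> x) (sort (map t [0..<b]))) = length (filter (\<lambda>l. t l \<le> x) [0..<b])"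
    by (simp add: filter_sort filter_map comp_def)
  also have "\<dots> = card {l \<in> {..<b}. t l \<le> x}"
    by (subst distinct_length_filter) (auto intro!: arg_cong[where f = card])
  finally show ?thesis
    using sorted_nth_le_iff_length_filter[of "sort (map t [0..<b])" k x] assms by simp
qed

text \<open>The \<open>k\<close>-th smallest \<open>t l\<close> is at most \<open>k \<alpha> / b\<close> iff at least \<open>k\<close> of the \<open>t l\<close> are, so
  the step-up set can be described without sorting.\<close>

definition bh_indices :: "nat \<Rightarrow> real \<Rightarrow> (nat \<Rightarrow> real) \<Rightarrow> nat set" where
  "bh_indices b \<alpha> t = {k \<in> {1..b}. k \<le> card {l \<in> {..<b}. t l \<le> real k * \<alpha> / real b}}"

definition bh_index :: "nat \<Rightarrow> real \<Rightarrow> (nat \<Rightarrow> real) \<Rightarrow> nat" where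
  "bh_index b \<alpha> t = Max (bh_indices b \<alpha> t)"

lemma B_set_eq_bh_indices: "B_set b s \<alpha> p = bh_indices b \<alpha> (block_p b s p)"
  unfolding B_set_def bh_indices_def block_order_stat_def sorted_block_p_def
  using sort_map_nth_le_iff_card by auto

lemma bh_indices_subset: "bh_indices b \<alpha> t \<subseteq> {1..b}"
  unfolding bh_indices_def by auto

lemma finite_bh_indices: "finite (bh_indices b \<alpha> t)"
  using finite_subset[OF bh_indices_subset] by blast

lemma bh_indices_cong:
  "(\<And>l. l < b \<Longrightarrow> t l = t' l) \<Longrightarrow> bh_indices b \<alpha> t = bh_indices b \<alpha> t'"
  unfolding bh_indices_def by (simp cong: conj_cong)

lemma bh_index_in_bh_indices:
  "bh_indices b \<alpha> t \<noteq> {} \<Longrightarrow> bh_index b \<alpha> t \<in> bh_indices b \<alpha> t"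
  unfolding bh_index_def using finite_bh_indices by (rule Max_in)

lemma one_in_bh_indices_fun_upd_zero:
  assumes "0 < \<alpha>" and "i < b"
  shows "1 \<in> bh_indices b \<alpha> (t(i := 0))"
proof -
  have "{i} \<subseteq> {l \<in> {..<b}. (t(i := 0)) l \<le> real 1 * \<alpha> / real b}"
    using assms by auto
  from card_mono[OF _ this] show ?thesis
    unfolding bh_indices_def using assms by auto
qed

lemma bh_index_fun_upd_zero:
  assumes ne: "bh_indices b \<alpha> t \<noteq> {}" and "0 < \<alpha>"
    and ti: "t i \<le> real (bh_index b \<alpha> t) * \<alpha> / real b"
  shows "bh_index b \<alpha> (t(i := 0)) = bh_index b \<alpha> t"
proof -
  define B where "B = bh_index b \<alpha> t"
  have same_above: "k \<in> bh_indices b \<alpha> (t(i := 0)) \<longleftrightarrow> k \<in> bh_indices b \<alpha> t" if "B \<le> k" for k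
  proof -
    have "real B * \<alpha> / real b \<le> real k * \<alpha> / real b"
      using that \<open>0 < \<alpha>\<close> by (intro divide_right_mono mult_right_mono) auto
    then have "{l \<in> {..<b}. (t(i := 0)) l \<le> real k * \<alpha> / real b} = {l \<in> {..<b}. t l \<le> real k * \<alpha> / real b}"
      using ti \<open>0 < \<alpha>\<close> unfolding B_def by auto
    then show ?thesis unfolding bh_indices_def by simp
  qed
  have "B \<in> bh_indices b \<alpha> (t(i := 0))"
    using same_above bh_index_in_bh_indices[OF ne] unfolding B_def by simp
  moreover have "k \<le> B" if "k \<in> bh_indices b \<alpha> (t(i := 0))" for k
    using same_above[of k] that finite_bh_indices unfolding B_def bh_index_def by force
  ultimately have "Max (bh_indices b \<alpha> (t(i := 0))) = B"
    using finite_bh_indices by (intro Max_eqI) auto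
  then show ?thesis unfolding B_def bh_index_def .
qed

text \<open>The leave-one-out index B_i; it does not depend on block i.\<close>

definition bh_index_without :: "nat \<Rightarrow> (nat \<Rightarrow> nat) \<Rightarrow> real \<Rightarrow> (nat \<Rightarrow> nat \<Rightarrow> real) \<Rightarrow> nat \<Rightarrow> nat" where
  "bh_index_without b s \<alpha> p i = bh_index b \<alpha> ((block_p b s p)(i := 0))"

lemma bh_index_without_mem:
  assumes "0 < \<alpha>" and "i < b"
  shows "bh_index_without b s \<alpha> p i \<in> {1..b}"
  using bh_index_in_bh_indices one_in_bh_indices_fun_upd_zero[OF assms] bh_indices_subset
  unfolding bh_index_without_def by blast

lemma total_n_ge_block_size: "l < b \<Longrightarrow> s l \<le> total_n b s"
  unfolding total_n_def by (rule member_le_sum) auto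

lemma total_n_ge_num_blocks: "(\<And>l. l < b \<Longrightarrow> 1 \<le> s l) \<Longrightarrow> b \<le> total_n b s"
  unfolding total_n_def using sum_mono[of "{..<b}" "\<lambda>_. 1::nat" s] by simp

lemma block_p_le_iff:
  assumes "l < b" and "1 \<le> s l"
  shows "block_p b s p l \<le> c \<longleftrightarrow> (\<exists>j<s l. p l j \<le> c * real b / real (total_n b s))"
proof -
  have pos: "0 < real b" "0 < real (total_n b s)"
    using assms total_n_ge_block_size[of l b s] by auto
  have ps: "{p l j | j. j < s l} = (\<lambda>j. p l j) ` {..<s l}" by auto
  have "block_p b s p l \<le> c \<longleftrightarrow> Min {p l j | j. j < s l} \<le> c * real b / real (total_n b s)"
    unfolding block_p_def using pos by (simp add: field_simps)
  also have "\<dots> \<longleftrightarrow> (\<exists>j<s l. p l j \<le> c * real b / real (total_n b s))"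
    unfolding ps using assms(2) by (subst Min_le_iff) (auto simp: lessThan_empty_iff)
  finally show ?thesis .
qed

lemma block_p_cong: "(\<And>j. j < s l \<Longrightarrow> p l j = q l j) \<Longrightarrow> block_p b s p l = block_p b s q l"
  unfolding block_p_def by (metis (no_types, lifting))

lemma bh_index_without_cong:
  assumes "\<And>l j. l < b \<Longrightarrow> l \<noteq> i \<Longrightarrow> j < s l \<Longrightarrow> p l j = q l j"
  shows "bh_index_without b s \<alpha> p i = bh_index_without b s \<alpha> q i"
proof -
  have "block_p b s p l = block_p b s q l" if "l < b" "l \<noteq> i" for l
    using assms that by (intro block_p_cong) auto
  then have "bh_indices b \<alpha> ((block_p b s p)(i := 0)) = bh_indices b \<alpha> ((block_p b s q)(i := 0))"
    by (intro bh_indices_cong) auto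
  then show ?thesis
    unfolding bh_index_without_def bh_index_def by simp
qed

lemma finite_hypotheses:
  fixes b :: nat and s :: "nat \<Rightarrow> nat"
  shows "finite {(i, j). i < b \<and> j < s i \<and> Q i j}"
  by (rule finite_subset[of _ "Sigma {..<b} (\<lambda>i. {..<s i})"]) auto

lemma card_hypotheses_le_total_n: "card {(i, j). i < b \<and> j < s i \<and> Q i j} \<le> total_n b s"
proof -
  have "card {(i, j). i < b \<and> j < s i \<and> Q i j} \<le> card (Sigma {..<b} (\<lambda>i. {..<s i}))"
    by (intro card_mono) auto
  then show ?thesis unfolding total_n_def by simp
qed

lemma two_stage_rejections_eq:
  assumes "B_set b s \<alpha> p \<noteq> {}"
  defines "B \<equiv> bh_index b \<alpha> (block_p b s p)"
  shows "two_stage_rejections b s \<alpha> p =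
    {(i, j). i < b \<and> j < s i \<and> block_p b s p i \<le> block_order_stat b s p B \<and>
             p i j \<le> real B * \<alpha> / real (total_n b s)}"
  using assms unfolding two_stage_rejections_def B_set_eq_bh_indices bh_index_def
  by (simp add: Let_def)

lemma block_order_stat_bh_index:
  assumes "B_set b s \<alpha> p \<noteq> {}"
  defines "B \<equiv> bh_index b \<alpha> (block_p b s p)"
  shows "B \<in> {1..b}" and "block_order_stat b s p B \<le> real B * \<alpha> / real b"
    and "B \<le> card {l \<in> {..<b}. block_p b s p l \<le> block_order_stat b s p B}"
proof -
  have "B \<in> B_set b s \<alpha> p"
    using bh_index_in_bh_indices assms unfolding B_set_eq_bh_indices by simp
  then show B: "B \<in> {1..b}" and "block_order_stat b s p B \<le> real B * \<alpha> / real b"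
    unfolding B_set_def by auto
  show "B \<le> card {l \<in> {..<b}. block_p b s p l \<le> block_order_stat b s p B}"
    using sort_map_nth_le_iff_card[of B b "block_p b s p"] B
    unfolding block_order_stat_def sorted_block_p_def by auto
qed

lemma bh_index_le_num_rej:
  assumes ne: "B_set b s \<alpha> p \<noteq> {}" and s: "\<And>l. l < b \<Longrightarrow> 1 \<le> s l"
  shows "bh_index b \<alpha> (block_p b s p) \<le> num_rej b s \<alpha> p"
proof -
  define B where "B = bh_index b \<alpha> (block_p b s p)"
  define R where "R = two_stage_rejections b s \<alpha> p"
  define Sel where "Sel = {l \<in> {..<b}. block_p b s p l \<le> block_order_stat b s p B}"
  note B = block_order_stat_bh_index[OF ne, folded B_def]
  have "finite R"
    unfolding R_def two_stage_rejections_eq[OF ne] by (rule finite_hypotheses)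
  txt \<open>Every selected block has its minimal p-value rejected.\<close>
  have "Sel \<subseteq> fst ` R"
  proof
    fix l assume "l \<in> Sel"
    then have l: "l < b" and tl: "block_p b s p l \<le> block_order_stat b s p B"
      unfolding Sel_def by auto
    then have "block_p b s p l \<le> real B * \<alpha> / real b" using B(2) by linarith
    then obtain j where "j < s l" "p l j \<le> real B * \<alpha> / real b * real b / real (total_n b s)"
      using block_p_le_iff[of l b s p] l s by blast
    then have "(l, j) \<in> R"
      using l tl unfolding R_def two_stage_rejections_eq[OF ne] B_def[symmetric] by simp
    then show "l \<in> fst ` R" by force
  qed
  then have "card Sel \<le> card R"
    using card_mono[OF finite_imageI[OF \<open>finite R\<close>]] card_image_le[OF \<open>finite R\<close>, of fst] by force
  then show ?thesis
    using B(3) unfolding Sel_def R_def num_rej_def B_def by simp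
qed

lemma bh_index_without_rejected:
  assumes ne: "B_set b s \<alpha> p \<noteq> {}" and "0 < \<alpha>"
    and ij: "(i, j) \<in> two_stage_rejections b s \<alpha> p"
  shows "bh_index_without b s \<alpha> p i = bh_index b \<alpha> (block_p b s p)"
proof -
  define B where "B = bh_index b \<alpha> (block_p b s p)"
  note B = block_order_stat_bh_index[OF ne, folded B_def]
  have "block_p b s p i \<le> block_order_stat b s p B"
    using ij unfolding two_stage_rejections_eq[OF ne] B_def by simp
  then have "block_p b s p i \<le> real B * \<alpha> / real b" using B(2) by linarith
  then show ?thesis
    unfolding bh_index_without_def B_def
    using bh_index_fun_upd_zero ne \<open>0 < \<alpha>\<close> B_set_eq_bh_indices by metis
qed

lemma false_discovery_proportion_le:
  fixes true_null :: "nat \<Rightarrow> nat \<Rightarrow> bool" and p :: "nat \<Rightarrow> nat \<Rightarrow> real"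
  assumes "0 < \<alpha>" and s: "\<And>l. l < b \<Longrightarrow> 1 \<le> s l"
  defines "T \<equiv> {(i, j). i < b \<and> j < s i \<and> true_null i j}"
    and "L \<equiv> bh_index_without b s \<alpha> p"
  shows "real (num_false_rej b s \<alpha> true_null p) / real (max (num_rej b s \<alpha> p) 1) \<le>
    (\<Sum>(i, j)\<in>T. if p i j \<le> real (L i) * \<alpha> / real (total_n b s) then 1 / real (L i) else 0)"
    (is "?fdp \<le> (\<Sum>(i, j)\<in>T. ?f i j)")
proof (cases "B_set b s \<alpha> p = {}")
  case True
  then have "?fdp = 0"
    unfolding num_false_rej_def two_stage_rejections_def by simp
  then show ?thesis by (auto intro: sum_nonneg)
next
  case ne: False
  define B where "B = bh_index b \<alpha> (block_p b s p)"
  define S where "S = {(i, j) \<in> T. L i = B \<and> p i j \<le> real B * \<alpha> / real (total_n b s)}"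
  have B: "1 \<le> B" using block_order_stat_bh_index(1)[OF ne] unfolding B_def by simp
  have "finite T"
    unfolding T_def by (rule finite_hypotheses)
  have "{(i, j) \<in> two_stage_rejections b s \<alpha> p. true_null i j} \<subseteq> S"
    using bh_index_without_rejected[OF ne \<open>0 < \<alpha>\<close>]
    unfolding S_def T_def L_def B_def two_stage_rejections_eq[OF ne] by auto
  then have V: "num_false_rej b s \<alpha> true_null p \<le> card S"
    unfolding num_false_rej_def using finite_subset[OF _ \<open>finite T\<close>, of S]
    by (intro card_mono) (auto simp: S_def)
  have "?fdp \<le> real (num_false_rej b s \<alpha> true_null p) / real B"
    using bh_index_le_num_rej[OF ne s] B unfolding B_def by (intro divide_left_mono) auto
  also have "\<dots> \<le> real (card S) / real B"
    using V B by (intro divide_right_mono) auto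
  also have "\<dots> = (\<Sum>(i, j)\<in>S. ?f i j)"
    by (simp add: S_def split_beta)
  also have "\<dots> \<le> (\<Sum>(i, j)\<in>T. ?f i j)"
    using \<open>finite T\<close> by (intro sum_mono2) (auto simp: S_def split: if_splits)
  finally show ?thesis .
qed

lemma measurable_bh_index:
  assumes t: "\<And>l c. l < b \<Longrightarrow> Measurable.pred N (\<lambda>y. t y l \<le> c)"
  shows "(\<lambda>y. bh_index b \<alpha> (t y)) \<in> measurable N (count_space UNIV)"
proof -
  have count: "Measurable.pred N (\<lambda>y. k \<le> card {l \<in> {..<b}. t y l \<le> c})" for k c
  proof (rule pred_const_le[OF measurable_card])
    fix l
    show "{y \<in> space N. l \<in> {l \<in> {..<b}. t y l \<le> c}} \<in> sets N"
      using t[of l c] by (cases "l < b") (auto simp: pred_def)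
  qed simp
  txt \<open>\<open>bh_indices\<close> ranges over the finite set \<open>Pow {1..b}\<close>, so it suffices to check level sets.\<close>
  have "(\<lambda>y. bh_indices b \<alpha> (t y)) \<in> measurable N (count_space (Pow {1..b}))"
    unfolding measurable_count_space_eq2[OF finite_Pow_iff[THEN iffD2, OF finite_atLeastAtMost]]
  proof safe
    fix A assume "A \<subseteq> {1..b}"
    then have "(\<lambda>y. bh_indices b \<alpha> (t y)) -` {A} \<inter> space N =
      {y \<in> space N. \<forall>k\<in>{1..b}. k \<le> card {l \<in> {..<b}. t y l \<le> real k * \<alpha> / real b} \<longleftrightarrow> k \<in> A}"
      unfolding bh_indices_def by (auto simp: subset_iff)
    also have "\<dots> \<in> sets N"
      unfolding pred_def[symmetric] by (intro pred_intros_finite(3) pred_intros_logic count) auto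
    finally show "(\<lambda>y. bh_indices b \<alpha> (t y)) -` {A} \<inter> space N \<in> sets N" .
  qed (auto simp: bh_indices_def)
  then show ?thesis
    unfolding bh_index_def by (rule measurable_compose) (rule measurable_count_space)
qed

lemma measurable_bh_index_without:
  fixes s :: "nat \<Rightarrow> nat" and \<alpha> :: real
  assumes s: "\<And>l. l < b \<Longrightarrow> 1 \<le> s l"
  shows "(\<lambda>y. bh_index_without b s \<alpha> y i) \<in>
    measurable (PiM ({..<b} - {i}) (\<lambda>l. PiM {..<s l} (\<lambda>_. borel))) (count_space UNIV)"
  unfolding bh_index_without_def
proof (rule measurable_bh_index)
  fix l c assume l: "l < b"
  show "Measurable.pred (PiM ({..<b} - {i}) (\<lambda>l. PiM {..<s l} (\<lambda>_. borel)))
      (\<lambda>y. ((block_p b s y)(i := 0)) l \<le> c)"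
  proof (cases "l = i")
    case False
    then have K: "l \<in> {..<b} - {i}" using l by simp
    have "Measurable.pred (PiM ({..<b} - {i}) (\<lambda>l. PiM {..<s l} (\<lambda>_. borel)))
        (\<lambda>y. \<exists>j\<in>{..<s l}. y l j \<le> c * real b / real (total_n b s))"
    proof (intro pred_intros_finite(4) pred_le_const)
      fix j assume "j \<in> {..<s l}"
      then show "(\<lambda>y. y l j) \<in> borel_measurable (PiM ({..<b} - {i}) (\<lambda>l. PiM {..<s l} (\<lambda>_. borel)))"
        by (rule measurable_compose[OF measurable_component_singleton[OF K] measurable_component_singleton])
    qed auto
    moreover have "((block_p b s y)(i := 0)) l \<le> c \<longleftrightarrow>
        (\<exists>j\<in>{..<s l}. y l j \<le> c * real b / real (total_n b s))" for y
      using False block_p_le_iff[of l b s y c] l s by auto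
    ultimately show ?thesis by presburger
  qed simp
qed

context prob_space
begin

lemma prob_le_uniform:
  assumes "U \<in> borel_measurable M" and "distr M lborel U = uniform_measure lborel {0..1}"
    and "0 \<le> x" and "x \<le> 1"
  shows "prob {\<omega> \<in> space M. U \<omega> \<le> x} = x"
proof -
  have "prob {\<omega> \<in> space M. U \<omega> \<le> x} = measure (distr M lborel U) {..x}"
    using assms(1) by (subst measure_distr) (auto intro!: arg_cong[where f = prob])
  also have "\<dots> = enn2real (emeasure lborel ({0..1} \<inter> {..x}) / emeasure lborel {0..1::real})"
    unfolding assms(2) by (simp add: measure_def)
  also have "{0..1} \<inter> {..x} = {0..x}" using assms(3,4) by auto
  finally show ?thesis
    using divide_ennreal[of x 1] assms(3) by simp
qed

lemma indep_var_bh_index_without: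
  fixes s :: "nat \<Rightarrow> nat" and \<alpha> :: real and P :: "nat \<Rightarrow> nat \<Rightarrow> 'a \<Rightarrow> real"
  assumes indep: "indep_vars (\<lambda>l. PiM {..<s l} (\<lambda>_. borel)) (\<lambda>l \<omega>. \<lambda>j\<in>{..<s l}. P l j \<omega>) {..<b}"
    and s: "\<And>l. l < b \<Longrightarrow> 1 \<le> s l" and "i < b" and "j < s i"
  shows "indep_var borel (\<lambda>\<omega>. real (bh_index_without b s \<alpha> (\<lambda>l j. P l j \<omega>) i)) borel (P i j)"
proof -
  define K where "K = {..<b} - {i}"
  define M' where "M' = (\<lambda>l. PiM {..<s l} (\<lambda>_. borel :: real measure))"
  define X where "X = (\<lambda>l \<omega>. \<lambda>j\<in>{..<s l}. P l j \<omega>)"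
  have "indep_var (PiM K M') (\<lambda>\<omega>. restrict (\<lambda>l. X l \<omega>) K) (PiM {i} M') (\<lambda>\<omega>. restrict (\<lambda>l. X l \<omega>) {i})"
    using indep \<open>i < b\<close> unfolding M'_def X_def K_def by (intro indep_var_restrict) auto
  moreover have "(\<lambda>y. real (bh_index_without b s \<alpha> y i)) \<in> borel_measurable (PiM K M')"
    unfolding K_def M'_def
    by (intro measurable_compose[OF measurable_bh_index_without borel_measurable_count_space] s)
  moreover have "(\<lambda>z. z i j) \<in> borel_measurable (PiM {i} M')"
    unfolding M'_def
    using measurable_compose[OF measurable_component_singleton[of i "{i}" "\<lambda>l. PiM {..<s l} (\<lambda>_. borel)"]
        measurable_component_singleton[of j "{..<s i}" "\<lambda>_. borel"]] \<open>j < s i\<close>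
    by simp
  ultimately have "indep_var borel ((\<lambda>y. real (bh_index_without b s \<alpha> y i)) \<circ> (\<lambda>\<omega>. restrict (\<lambda>l. X l \<omega>) K))
      borel ((\<lambda>z. z i j) \<circ> (\<lambda>\<omega>. restrict (\<lambda>l. X l \<omega>) {i}))"
    by (rule indep_var_compose)
  also have "(\<lambda>y. real (bh_index_without b s \<alpha> y i)) \<circ> (\<lambda>\<omega>. restrict (\<lambda>l. X l \<omega>) K) =
      (\<lambda>\<omega>. real (bh_index_without b s \<alpha> (\<lambda>l j. P l j \<omega>) i))"
    unfolding comp_def
    by (intro ext arg_cong[where f = real] bh_index_without_cong) (auto simp: K_def X_def)
  also have "(\<lambda>z. z i j) \<circ> (\<lambda>\<omega>. restrict (\<lambda>l. X l \<omega>) {i}) = P i j"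
    using \<open>j < s i\<close> by (auto simp: X_def)
  finally show ?thesis .
qed

lemma expectation_uniform_le_indep_index:
  fixes L :: "'a \<Rightarrow> nat" and U :: "'a \<Rightarrow> real"
  assumes indep: "indep_var borel (\<lambda>\<omega>. real (L \<omega>)) borel U"
    and unif: "distr M lborel U = uniform_measure lborel {0..1}"
    and L: "\<And>\<omega>. \<omega> \<in> space M \<Longrightarrow> L \<omega> \<in> {1..b}"
    and "0 \<le> c" and "real b * c \<le> 1"
  shows "integrable M (\<lambda>\<omega>. if U \<omega> \<le> real (L \<omega>) * c then 1 / real (L \<omega>) else 0)"
    and "expectation (\<lambda>\<omega>. if U \<omega> \<le> real (L \<omega>) * c then 1 / real (L \<omega>) else 0) = c"
proof -
  have [measurable]: "(\<lambda>\<omega>. real (L \<omega>)) \<in> borel_measurable M" "U \<in> borel_measurable M"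
    using indep_var_rv1[OF indep] indep_var_rv2[OF indep] by auto
  have L_events: "{\<omega> \<in> space M. L \<omega> = k} \<in> events" for k
  proof -
    have "{\<omega> \<in> space M. L \<omega> = k} = {\<omega> \<in> space M. real (L \<omega>) = real k}" by simp
    then show ?thesis by (simp only:) measurable
  qed
  define E where "E k = {\<omega> \<in> space M. L \<omega> = k \<and> U \<omega> \<le> real k * c}" for k
  have "E k = {\<omega> \<in> space M. real (L \<omega>) = real k \<and> U \<omega> \<le> real k * c}" for k
    unfolding E_def by simp
  then have E_events: "E k \<in> events" for k
    by (simp only:) measurable
  have prob_E: "prob (E k) = prob {\<omega> \<in> space M. L \<omega> = k} * (real k * c)" if "k \<in> {1..b}" for k
  proof -
    have "real k * c \<le> real b * c" using that \<open>0 \<le> c\<close> by (intro mult_right_mono) auto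
    then have "prob {\<omega> \<in> space M. U \<omega> \<le> real k * c} = real k * c"
      using \<open>0 \<le> c\<close> \<open>real b * c \<le> 1\<close> by (intro prob_le_uniform unif) auto
    moreover have "E k = (\<lambda>\<omega>. (real (L \<omega>), U \<omega>)) -` ({real k} \<times> {..real k * c}) \<inter> space M"
      unfolding E_def by auto
    moreover have "(\<lambda>\<omega>. real (L \<omega>)) -` {real k} \<inter> space M = {\<omega> \<in> space M. L \<omega> = k}"
      by auto
    moreover have "U -` {..real k * c} \<inter> space M = {\<omega> \<in> space M. U \<omega> \<le> real k * c}"
      by auto
    ultimately show ?thesis
      using indep_varD[OF indep, of "{real k}" "{..real k * c}"] by simp
  qed
  have f_eq: "(if U \<omega> \<le> real (L \<omega>) * c then 1 / real (L \<omega>) else 0) =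
      (\<Sum>k\<in>{1..b}. indicator (E k) \<omega> / real k)" if "\<omega> \<in> space M" for \<omega>
  proof -
    have "(\<Sum>k\<in>{1..b}. indicator (E k) \<omega> / real k) =
        (\<Sum>k\<in>{1..b}. if k = L \<omega> then (if U \<omega> \<le> real k * c then 1 / real k else 0) else 0)"
      using that by (intro sum.cong) (auto simp: E_def indicator_def)
    then show ?thesis
      using L[OF that] by (simp add: sum.delta')
  qed
  have integrable_sum: "integrable M (\<lambda>\<omega>. \<Sum>k\<in>{1..b}. indicator (E k) \<omega> / real k)"
    by (intro Bochner_Integration.integrable_sum integrable_divide integrable_real_indicator)
       (auto simp: E_events less_top[symmetric])
  moreover have "integrable M (\<lambda>\<omega>. if U \<omega> \<le> real (L \<omega>) * c then 1 / real (L \<omega>) else 0) \<longleftrightarrow>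
      integrable M (\<lambda>\<omega>. \<Sum>k\<in>{1..b}. indicator (E k) \<omega> / real k)"
    using f_eq by (intro Bochner_Integration.integrable_cong) auto
  ultimately show "integrable M (\<lambda>\<omega>. if U \<omega> \<le> real (L \<omega>) * c then 1 / real (L \<omega>) else 0)"
    by blast
  have "expectation (\<lambda>\<omega>. if U \<omega> \<le> real (L \<omega>) * c then 1 / real (L \<omega>) else 0) =
      expectation (\<lambda>\<omega>. \<Sum>k\<in>{1..b}. indicator (E k) \<omega> / real k)"
    by (rule Bochner_Integration.integral_cong[OF refl f_eq])
  also have "\<dots> = (\<Sum>k\<in>{1..b}. prob (E k) / real k)"
    by (subst Bochner_Integration.integral_sum)
       (auto simp: E_events less_top[symmetric] integral_divide_zero)
  also have "\<dots> = c * (\<Sum>k\<in>{1..b}. prob {\<omega> \<in> space M. L \<omega> = k})"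
    by (simp add: prob_E sum_distrib_left mult.commute)
  also have "(\<Sum>k\<in>{1..b}. prob {\<omega> \<in> space M. L \<omega> = k}) = prob (\<Union>k\<in>{1..b}. {\<omega> \<in> space M. L \<omega> = k})"
    using L_events by (intro finite_measure_finite_Union[symmetric]) (auto simp: disjoint_family_on_def)
  also have "(\<Union>k\<in>{1..b}. {\<omega> \<in> space M. L \<omega> = k}) = space M"
    using L by auto
  finally show "expectation (\<lambda>\<omega>. if U \<omega> \<le> real (L \<omega>) * c then 1 / real (L \<omega>) else 0) = c"
    by (simp add: prob_space)
qed

lemma expectation_true_null_term:
  fixes s :: "nat \<Rightarrow> nat" and P :: "nat \<Rightarrow> nat \<Rightarrow> 'a \<Rightarrow> real"
  assumes indep: "indep_vars (\<lambda>l. PiM {..<s l} (\<lambda>_. borel)) (\<lambda>l \<omega>. \<lambda>j\<in>{..<s l}. P l j \<omega>) {..<b}"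
    and s: "\<And>l. l < b \<Longrightarrow> 1 \<le> s l" and "i < b" and "j < s i"
    and unif: "distr M lborel (P i j) = uniform_measure lborel {0..1}"
    and "0 < \<alpha>" and "\<alpha> < 1"
  defines "f \<omega> \<equiv> let L = bh_index_without b s \<alpha> (\<lambda>l j. P l j \<omega>) i in
    if P i j \<omega> \<le> real L * \<alpha> / real (total_n b s) then 1 / real L else 0"
  shows "integrable M f" and "expectation f = \<alpha> / real (total_n b s)"
proof -
  have "b \<le> total_n b s" using total_n_ge_num_blocks s by blast
  moreover have "real b * \<alpha> \<le> real b" using \<open>\<alpha> < 1\<close> by (intro mult_left_le) auto
  ultimately have "real b * \<alpha> \<le> real (total_n b s)" by linarith
  then have "real b * (\<alpha> / real (total_n b s)) \<le> 1"
    using \<open>i < b\<close> \<open>b \<le> total_n b s\<close> by (simp add: field_simps)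
  then have "integrable M f \<and> expectation f = \<alpha> / real (total_n b s)"
    using bh_index_without_mem[OF \<open>0 < \<alpha>\<close> \<open>i < b\<close>] \<open>0 < \<alpha>\<close>
    unfolding f_def Let_def times_divide_eq_right[symmetric]
    by (intro conjI expectation_uniform_le_indep_index indep_var_bh_index_without[OF indep s]
        unif \<open>i < b\<close> \<open>j < s i\<close>) auto
  then show "integrable M f" and "expectation f = \<alpha> / real (total_n b s)"
    by auto
qed

end

theorem mainTheorem1:
  fixes M :: "'a measure" and b :: nat and s :: "nat \<Rightarrow> nat"
    and P :: "nat \<Rightarrow> nat \<Rightarrow> 'a \<Rightarrow> real" and \<alpha> :: real
    and true_null :: "nat \<Rightarrow> nat \<Rightarrow> bool"
  assumes "prob_space M"
    and "b \<ge> 1"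
    and "\<And>i. i < b \<Longrightarrow> s i \<ge> 1"
    and "\<And>i j. i < b \<Longrightarrow> j < s i \<Longrightarrow> P i j \<in> borel_measurable M"
    and "\<And>i j. i < b \<Longrightarrow> j < s i \<Longrightarrow> true_null i j \<Longrightarrow>
           distr M lborel (P i j) = uniform_measure lborel {0..1}"
    and "prob_space.indep_vars M (\<lambda>i. PiM {..<s i} (\<lambda>_. borel))
           (\<lambda>i \<omega>. \<lambda>j\<in>{..<s i}. P i j \<omega>) {..<b}"
    and "0 < \<alpha>" and "\<alpha> < 1"
  shows "FDR M b s \<alpha> true_null P \<le> \<alpha>"
proof -
  txt \<open>The measurability hypothesis on \<open>P\<close> is implied by the independence hypothesis.\<close>
  interpret prob_space M by fact
  define n where "n = total_n b s"
  define T where "T = {(i, j). i < b \<and> j < s i \<and> true_null i j}"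
  define f where "f i j \<omega> = (let L = bh_index_without b s \<alpha> (\<lambda>l j. P l j \<omega>) i in
    if P i j \<omega> \<le> real L * \<alpha> / real n then 1 / real L else 0)" for i j \<omega>
  have f: "integrable M (f i j)" "expectation (f i j) = \<alpha> / real n" if "(i, j) \<in> T" for i j
    using expectation_true_null_term[OF assms(6)] assms(3,5,7,8) that
    unfolding f_def n_def T_def by auto
  have "FDR M b s \<alpha> true_null P \<le> expectation (\<lambda>\<omega>. \<Sum>(i, j)\<in>T. f i j \<omega>)"
    unfolding FDR_def
  proof (rule integral_mono')
    show "integrable M (\<lambda>\<omega>. \<Sum>(i, j)\<in>T. f i j \<omega>)"
      using f by (auto intro: Bochner_Integration.integrable_sum split: prod.split)
  qed (use false_discovery_proportion_le[OF assms(7), where s = s and true_null = true_null] assms(3)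
       in \<open>auto simp: f_def Let_def T_def n_def intro: sum_nonneg\<close>)
  also have "\<dots> = real (card T) * (\<alpha> / real n)"
    using f by (subst Bochner_Integration.integral_sum) (auto simp: split_beta)
  also have "\<dots> \<le> \<alpha>"
    using card_hypotheses_le_total_n[of b s true_null] total_n_ge_num_blocks[of b s] assms(2,3,7)
    unfolding T_def n_def by (simp add: field_simps)
  finally show ?thesis .
qed

end
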